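(* Let $H\in\mathbb R^{d\times p}$ have rank $d$ and let $\prec$ be a partial order on $[d]$. Then there exists a unique partial order RQ decomposition $H=RQ$ of $H$ with respect to $\prec$. If moreover $\prec$ is consistent with the total order $1,2,\dots,d$ (i.e. $i\prec j$ implies $i<j$), then this decomposition is produced by the following procedure: for $i=d,d-1,\dots,1$, let $\mathbf h_i$ be the $i$-th row of $H$, let $W_i=\langle\mathbf q_j:j\succ i\rangle$, set $\mathbf q_i:=\mathrm{proj}_{W_i^\perp}\mathbf h_i/\|\mathrm{proj}_{W_i^\perp}\mathbf h_i\|_2$ as the $i$-th row of $Q$, let $Q_{\succeq i}$ be the submatrix of $Q$ consisting of the rows $\mathbf q_j$ with $j\succeq i$, let $\mathbf r:=(Q_{\succeq i}^\top)^\dagger\mathbf h_i^\top$, and set $R_{ij}$ equal to the entry of $\mathbf r$ corresponding to row $j$ for each $j\succeq i$, and $R_{ij}=0$ otherwise.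
   Context: $[d]=\{1,\dots,d\}$; $i\preceq j$ means $i\prec j$ or $i=j$; $\langle\cdot\rangle$ denotes linear span; $M^\dagger$ the Moore–Penrose pseudoinverse. Given a partial order $\prec$ on $[d]$, a partial order RQ decomposition of $H\in\mathbb R^{d\times p}$ is a factorization $H=RQ$ with $R\in\mathbb R^{d\times d}$ satisfying $R_{ii}\ge0$ and $R_{ij}=0$ unless $i\preceq j$, and $Q\in\mathbb R^{d\times p}$ whose $i$-th row $\mathbf q_i$ has Euclidean norm $1$ and is orthogonal to $\langle\mathbf q_j:i\prec j\rangle$. *)

theory Defs
  imports "Jordan_Normal_Form.DL_Rank" "Jordan_Normal_Form.DL_Submatrix"
begin

(* Row/column indices are 0-based, so the index set [d] = {1..d} of the paper
   is rendered as {0..<d} (index i here corresponds to i+1 in the paper). *)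

definition lin_span :: "nat \<Rightarrow> real vec set \<Rightarrow> real vec set" where
  "lin_span n S = {v. \<exists>F c. finite F \<and> F \<subseteq> S \<and>
      v = finsum_vec TYPE(real) n (\<lambda>w. c w \<cdot>\<^sub>v w) F}"

definition vnorm :: "real vec \<Rightarrow> real" where
  "vnorm v = sqrt (v \<bullet> v)"

definition proj_perp :: "nat \<Rightarrow> real vec set \<Rightarrow> real vec \<Rightarrow> real vec" where
  "proj_perp n W h = (THE u. u \<in> carrier_vec n \<and> (\<forall>w\<in>W. u \<bullet> w = 0) \<and> h - u \<in> W)"

definition pinv :: "real mat \<Rightarrow> real mat" where
  "pinv A = (THE X. X \<in> carrier_mat (dim_col A) (dim_row A) \<and>
      A * X * A = A \<and> X * A * X = X \<and>
      transpose_mat (A * X) = A * X \<and> transpose_mat (X * A) = X * A)"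

definition strict_po_on :: "nat \<Rightarrow> (nat \<Rightarrow> nat \<Rightarrow> bool) \<Rightarrow> bool" where
  "strict_po_on d lt \<longleftrightarrow> (\<forall>i<d. \<not> lt i i) \<and>
      (\<forall>i<d. \<forall>j<d. \<forall>k<d. lt i j \<longrightarrow> lt j k \<longrightarrow> lt i k)"

definition is_poRQ :: "nat \<Rightarrow> nat \<Rightarrow> (nat \<Rightarrow> nat \<Rightarrow> bool) \<Rightarrow> real mat \<Rightarrow> real mat \<Rightarrow> real mat \<Rightarrow> bool" where
  "is_poRQ d p lt H R Q \<longleftrightarrow>
     R \<in> carrier_mat d d \<and> Q \<in> carrier_mat d p \<and> H = R * Q \<and>
     (\<forall>i<d. R $$ (i, i) \<ge> 0) \<and>
     (\<forall>i<d. \<forall>j<d. \<not> (lt i j \<or> i = j) \<longrightarrow> R $$ (i, j) = 0) \<and>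
     (\<forall>i<d. vnorm (row Q i) = 1) \<and>
     (\<forall>i<d. \<forall>v\<in>lin_span p {row Q j | j. j < d \<and> lt i j}. row Q i \<bullet> v = 0)"

text \<open>The procedure.  qsteps lt H k holds the rows q_i computed after the first k steps,
  i.e. for i = d-1, ..., d-k (steps run i = d-1 down to 0); unset rows are zero.\<close>
fun qsteps :: "(nat \<Rightarrow> nat \<Rightarrow> bool) \<Rightarrow> real mat \<Rightarrow> nat \<Rightarrow> (nat \<Rightarrow> real vec)" where
  "qsteps lt H 0 = (\<lambda>j. 0\<^sub>v (dim_col H))"
| "qsteps lt H (Suc k) =
     (let f = qsteps lt H k;
          i = dim_row H - Suc k;
          W = lin_span (dim_col H) {f j | j. j < dim_row H \<and> lt i j};
          u = proj_perp (dim_col H) W (row H i)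
      in f(i := (1 / vnorm u) \<cdot>\<^sub>v u))"

definition procQ :: "(nat \<Rightarrow> nat \<Rightarrow> bool) \<Rightarrow> real mat \<Rightarrow> real mat" where
  "procQ lt H = mat (dim_row H) (dim_col H) (\<lambda>(i, j). qsteps lt H (dim_row H) i $ j)"

text \<open>Row i of R: r = (Q_{>=i}^T)^dagger h_i^T, where Q_{>=i} is the submatrix of Q of rows
  j with i <= j (in increasing order of j); the entry of r corresponding to row j is the
  entry at position card {a in S. a < j}.\<close>
definition procR :: "(nat \<Rightarrow> nat \<Rightarrow> bool) \<Rightarrow> real mat \<Rightarrow> real mat" where
  "procR lt H = mat (dim_row H) (dim_row H) (\<lambda>(i, j).
     (let S = {a. lt i a \<or> a = i};
          Qsub = submatrix (procQ lt H) S UNIV;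
          r = pinv (transpose_mat Qsub) *\<^sub>v row H i
      in if j \<in> S then r $ card {a \<in> S. a < j} else 0))"

end

(*
  Write W_i for the span of the rows h_j of H with j succeeding i. The successors of i form an
  up-closed set, so in any decomposition H = RQ the rows q_j with j succeeding i span the same
  space W_i. Hence h_i = R_ii q_i + w with w in W_i and q_i orthogonal to W_i: the vector R_ii q_i
  is forced to be the projection of h_i onto the orthogonal complement of W_i, which is non-zero
  because H has full row rank. Inductively along the order this determines Q. The rows q_i are
  linearly independent (in a vanishing combination, the row h_m of a minimal index m with
  non-zero coefficient occurs only in q_m), which determines R. When the order refines
  1 < ... < d, the procedure computes exactly these rows q_i; the columns of the transpose of
  Q_{>=i} are independent, so its pseudoinverse is a left inverse and r recovers the
  coefficients of h_i.
*)

theory Submission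
  imports Defs
begin

section \<open>Linear combinations of indexed families\<close>

definition lincomb_fam :: "nat \<Rightarrow> 'i set \<Rightarrow> ('i \<Rightarrow> real) \<Rightarrow> ('i \<Rightarrow> real vec) \<Rightarrow> real vec" where
  "lincomb_fam n J a f = vec n (\<lambda>l. \<Sum>j\<in>J. a j * f j $ l)"

definition span_fam :: "nat \<Rightarrow> 'i set \<Rightarrow> ('i \<Rightarrow> real vec) \<Rightarrow> real vec set" where
  "span_fam n J f = range (\<lambda>a. lincomb_fam n J a f)"

definition lin_indep_fam :: "nat \<Rightarrow> 'i set \<Rightarrow> ('i \<Rightarrow> real vec) \<Rightarrow> bool" where
  "lin_indep_fam n J f \<longleftrightarrow> (\<forall>a. lincomb_fam n J a f = 0\<^sub>v n \<longrightarrow> (\<forall>j\<in>J. a j = 0))"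

lemma lincomb_fam_carrier [simp]: "lincomb_fam n J a f \<in> carrier_vec n"
  and dim_lincomb_fam [simp]: "dim_vec (lincomb_fam n J a f) = n"
  by (simp_all add: lincomb_fam_def)

lemma index_lincomb_fam [simp]: "l < n \<Longrightarrow> lincomb_fam n J a f $ l = (\<Sum>j\<in>J. a j * f j $ l)"
  by (simp add: lincomb_fam_def)

lemma lincomb_fam_diff:
  "lincomb_fam n J a f - lincomb_fam n J b f = lincomb_fam n J (\<lambda>j. a j - b j) f"
  by (rule eq_vecI) (auto simp: sum_subtractf algebra_simps)

lemma lincomb_fam_add:
  "lincomb_fam n J a f + lincomb_fam n J b f = lincomb_fam n J (\<lambda>j. a j + b j) f"
  by (rule eq_vecI) (auto simp: sum.distrib algebra_simps)

lemma lincomb_fam_smult: "c \<cdot>\<^sub>v lincomb_fam n J a f = lincomb_fam n J (\<lambda>j. c * a j) f"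
  by (rule eq_vecI) (auto simp: sum_distrib_left algebra_simps)

lemma lincomb_fam_cong:
  "(\<And>j. j \<in> J \<Longrightarrow> a j = b j) \<Longrightarrow> (\<And>j. j \<in> J \<Longrightarrow> f j = g j) \<Longrightarrow>
    lincomb_fam n J a f = lincomb_fam n J b g"
  by (rule eq_vecI) auto

lemma lincomb_fam_mono_neutral:
  "finite K \<Longrightarrow> J \<subseteq> K \<Longrightarrow> (\<And>j. j \<in> K - J \<Longrightarrow> a j = 0) \<Longrightarrow>
    lincomb_fam n K a f = lincomb_fam n J a f"
  by (rule eq_vecI) (auto intro: sum.mono_neutral_right)

lemma lincomb_fam_insert:
  "finite J \<Longrightarrow> i \<notin> J \<Longrightarrow> f i \<in> carrier_vec n \<Longrightarrow>
    lincomb_fam n (insert i J) a f = a i \<cdot>\<^sub>v f i + lincomb_fam n J a f"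
  by (rule eq_vecI) auto

lemma scalar_prod_lincomb_fam:
  assumes "\<And>j. j \<in> J \<Longrightarrow> f j \<in> carrier_vec n"
  shows "x \<bullet> lincomb_fam n J a f = (\<Sum>j\<in>J. a j * (x \<bullet> f j))"
proof -
  have "x \<bullet> lincomb_fam n J a f = (\<Sum>l<n. \<Sum>j\<in>J. a j * (x $ l * f j $ l))"
    unfolding scalar_prod_def by (simp add: atLeast0LessThan sum_distrib_left mult.left_commute)
  also have "\<dots> = (\<Sum>j\<in>J. a j * (\<Sum>l<n. x $ l * f j $ l))"
    by (subst sum.swap) (simp add: sum_distrib_left)
  also have "\<dots> = (\<Sum>j\<in>J. a j * (x \<bullet> f j))"
  proof (intro sum.cong refl)
    fix j assume "j \<in> J"
    then have "dim_vec (f j) = n" using assms carrier_vecD by blast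
    then show "a j * (\<Sum>l<n. x $ l * f j $ l) = a j * (x \<bullet> f j)"
      by (simp add: scalar_prod_def atLeast0LessThan)
  qed
  finally show ?thesis .
qed

lemma lincomb_fam_in_span [simp]: "lincomb_fam n J a f \<in> span_fam n J f"
  unfolding span_fam_def by blast

lemma span_fam_mono:
  assumes "finite K" "J \<subseteq> K"
  shows "span_fam n J f \<subseteq> span_fam n K f"
proof
  fix v assume "v \<in> span_fam n J f"
  then obtain a where "v = lincomb_fam n J a f" unfolding span_fam_def by blast
  also have "\<dots> = lincomb_fam n J (\<lambda>j. if j \<in> J then a j else 0) f"
    by (rule lincomb_fam_cong) auto
  also have "\<dots> = lincomb_fam n K (\<lambda>j. if j \<in> J then a j else 0) f"
    using assms by (intro lincomb_fam_mono_neutral[symmetric]) auto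
  finally show "v \<in> span_fam n K f" by simp
qed

lemma span_fam_generator:
  assumes "finite J" "j \<in> J" "f j \<in> carrier_vec n"
  shows "f j \<in> span_fam n J f"
proof -
  have "lincomb_fam n J (\<lambda>k. if k = j then 1 else 0) f = lincomb_fam n {j} (\<lambda>k. if k = j then 1 else 0) f"
    using assms by (intro lincomb_fam_mono_neutral) auto
  also have "\<dots> = f j"
    using assms(3) by (intro eq_vecI) auto
  finally show ?thesis by (metis lincomb_fam_in_span)
qed

lemma span_fam_zero: "0\<^sub>v n \<in> span_fam n J f"
proof -
  have "lincomb_fam n J (\<lambda>_. 0) f = 0\<^sub>v n" by (rule eq_vecI) auto
  then show ?thesis by (metis lincomb_fam_in_span)
qed

lemma span_fam_add: "v \<in> span_fam n J f \<Longrightarrow> w \<in> span_fam n J f \<Longrightarrow> v + w \<in> span_fam n J f"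
  unfolding span_fam_def by (auto simp: lincomb_fam_add)

lemma span_fam_diff: "v \<in> span_fam n J f \<Longrightarrow> w \<in> span_fam n J f \<Longrightarrow> v - w \<in> span_fam n J f"
  unfolding span_fam_def by (auto simp: lincomb_fam_diff)

lemma span_fam_smult: "v \<in> span_fam n J f \<Longrightarrow> c \<cdot>\<^sub>v v \<in> span_fam n J f"
  unfolding span_fam_def by (auto simp: lincomb_fam_smult)

lemma span_fam_cong: "(\<And>j. j \<in> J \<Longrightarrow> f j = g j) \<Longrightarrow> span_fam n J f = span_fam n J g"
proof -
  assume "\<And>j. j \<in> J \<Longrightarrow> f j = g j"
  then have "lincomb_fam n J a f = lincomb_fam n J a g" for a by (intro lincomb_fam_cong) auto
  then show ?thesis unfolding span_fam_def by simp
qed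

lemma span_fam_subset:
  assumes "\<And>k. k \<in> K \<Longrightarrow> g k \<in> span_fam n J f"
  shows "span_fam n K g \<subseteq> span_fam n J f"
proof
  fix v assume "v \<in> span_fam n K g"
  then obtain b where v: "v = lincomb_fam n K b g" unfolding span_fam_def by blast
  have "\<forall>k\<in>K. \<exists>a. g k = lincomb_fam n J a f" using assms unfolding span_fam_def by blast
  then obtain A where A: "\<And>k. k \<in> K \<Longrightarrow> g k = lincomb_fam n J (A k) f"
    by (metis bchoice)
  have "v = lincomb_fam n J (\<lambda>j. \<Sum>k\<in>K. b k * A k j) f"
  proof (rule eq_vecI)
    fix l assume "l < dim_vec (lincomb_fam n J (\<lambda>j. \<Sum>k\<in>K. b k * A k j) f)"
    then have "l < n" by simp
    then have "v $ l = (\<Sum>k\<in>K. \<Sum>j\<in>J. b k * (A k j * f j $ l))"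
      by (simp add: v A sum_distrib_left)
    also have "\<dots> = (\<Sum>j\<in>J. (\<Sum>k\<in>K. b k * A k j) * f j $ l)"
      by (subst sum.swap) (simp add: sum_distrib_right mult.assoc)
    finally show "v $ l = lincomb_fam n J (\<lambda>j. \<Sum>k\<in>K. b k * A k j) f $ l"
      using \<open>l < n\<close> by simp
  qed (simp add: v)
  then show "v \<in> span_fam n J f" by simp
qed

lemma orthogonal_span_fam:
  assumes "\<And>j. j \<in> J \<Longrightarrow> f j \<in> carrier_vec n" "\<And>j. j \<in> J \<Longrightarrow> x \<bullet> f j = 0"
    and "w \<in> span_fam n J f"
  shows "x \<bullet> w = 0"
  using assms(3) unfolding span_fam_def by (auto simp: scalar_prod_lincomb_fam assms)

lemma lin_span_subset_span_fam:
  assumes "finite J" "f ` J \<subseteq> carrier_vec n"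
  shows "lin_span n (f ` J) \<subseteq> span_fam n J f"
proof
  fix v assume "v \<in> lin_span n (f ` J)"
  then obtain F c where F: "finite F" "F \<subseteq> f ` J"
    and v: "v = finsum_vec TYPE(real) n (\<lambda>w. c w \<cdot>\<^sub>v w) F"
    unfolding lin_span_def by blast
  define g where "g = inv_into J f"
  have g_inj: "inj_on g F" using F(2) unfolding g_def by (meson inj_on_inv_into)
  have g_F: "g ` F \<subseteq> J" using F(2) unfolding g_def by (auto intro: inv_into_into)
  have f_g: "f (g w) = w" if "w \<in> F" for w using F(2) that unfolding g_def by (meson f_inv_into_f subsetD)
  have F_carrier: "F \<subseteq> carrier_vec n" using F(2) assms(2) by blast
  then have v_carrier: "v \<in> carrier_vec n" unfolding v by (intro finsum_vec_closed) auto
  define a where "a j = (if j \<in> g ` F then c (f j) else 0)" for j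
  have "v = lincomb_fam n (g ` F) a f"
  proof (rule eq_vecI)
    fix l assume "l < dim_vec (lincomb_fam n (g ` F) a f)"
    then have l: "l < n" by simp
    have "v $ l = (\<Sum>w\<in>F. c w * w $ l)"
      unfolding v using F(1) F_carrier l by (subst index_finsum_vec) (auto intro!: sum.cong simp: subset_iff)
    also have "\<dots> = (\<Sum>j\<in>g ` F. a j * f j $ l)"
      by (simp add: sum.reindex[OF g_inj] f_g a_def)
    finally show "v $ l = lincomb_fam n (g ` F) a f $ l" using l by simp
  qed (use v_carrier in simp)
  also have "\<dots> = lincomb_fam n J a f"
    using assms(1) g_F by (intro lincomb_fam_mono_neutral[symmetric]) (auto simp: a_def)
  finally show "v \<in> span_fam n J f" by simp
qed

lemma span_fam_subset_lin_span:
  assumes "finite J" "f ` J \<subseteq> carrier_vec n"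
  shows "span_fam n J f \<subseteq> lin_span n (f ` J)"
proof
  fix v assume "v \<in> span_fam n J f"
  then obtain a where v: "v = lincomb_fam n J a f" unfolding span_fam_def by blast
  \<comment> \<open>indices with the same vector have their coefficients merged\<close>
  define c where "c w = (\<Sum>j\<in>{j\<in>J. f j = w}. a j)" for w
  let ?w = "finsum_vec TYPE(real) n (\<lambda>w. c w \<cdot>\<^sub>v w) (f ` J)"
  have w_carrier: "?w \<in> carrier_vec n" using assms(2) by (intro finsum_vec_closed) auto
  have "v = ?w"
  proof (rule eq_vecI)
    fix l assume "l < dim_vec ?w"
    then have l: "l < n" using w_carrier by simp
    have "?w $ l = (\<Sum>w\<in>f ` J. c w * w $ l)"
      using assms l by (subst index_finsum_vec) (auto intro!: sum.cong simp: subset_iff)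
    also have "\<dots> = (\<Sum>w\<in>f ` J. \<Sum>j\<in>{j\<in>J. f j = w}. a j * f j $ l)"
      unfolding c_def sum_distrib_right by (intro sum.cong) auto
    also have "\<dots> = (\<Sum>j\<in>J. a j * f j $ l)"
      using assms(1) by (rule sum.image_gen[symmetric])
    finally show "v $ l = ?w $ l" using l v by simp
  qed (use w_carrier in \<open>simp add: v\<close>)
  then show "v \<in> lin_span n (f ` J)" unfolding lin_span_def using assms(1) by blast
qed

lemma lin_span_image_eq_span_fam:
  assumes "finite J" "\<And>j. j \<in> J \<Longrightarrow> f j \<in> carrier_vec n"
  shows "lin_span n (f ` J) = span_fam n J f"
proof -
  have "f ` J \<subseteq> carrier_vec n" using assms(2) by blast
  then show ?thesis
    by (intro equalityI lin_span_subset_span_fam[OF assms(1)] span_fam_subset_lin_span[OF assms(1)])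
qed

lemma lin_indep_fam_subset:
  "lin_indep_fam n K f \<Longrightarrow> finite K \<Longrightarrow> J \<subseteq> K \<Longrightarrow> lin_indep_fam n J f"
  unfolding lin_indep_fam_def
proof (intro allI impI ballI)
  fix a j assume indep: "\<forall>a. lincomb_fam n K a f = 0\<^sub>v n \<longrightarrow> (\<forall>j\<in>K. a j = 0)"
    and "finite K" "J \<subseteq> K" "lincomb_fam n J a f = 0\<^sub>v n" "j \<in> J"
  have "lincomb_fam n K (\<lambda>j. if j \<in> J then a j else 0) f = lincomb_fam n J (\<lambda>j. if j \<in> J then a j else 0) f"
    using \<open>finite K\<close> \<open>J \<subseteq> K\<close> by (intro lincomb_fam_mono_neutral) auto
  also have "\<dots> = lincomb_fam n J a f" by (rule lincomb_fam_cong) auto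
  finally show "a j = 0" using indep \<open>J \<subseteq> K\<close> \<open>j \<in> J\<close> \<open>lincomb_fam n J a f = 0\<^sub>v n\<close> by fastforce
qed

lemma lin_indep_fam_coeffs_eq:
  "lin_indep_fam n J f \<Longrightarrow> lincomb_fam n J a f = lincomb_fam n J b f \<Longrightarrow> j \<in> J \<Longrightarrow> a j = b j"
proof -
  assume "lin_indep_fam n J f" "lincomb_fam n J a f = lincomb_fam n J b f" "j \<in> J"
  moreover have "lincomb_fam n J (\<lambda>j. a j - b j) f = 0\<^sub>v n"
    using \<open>lincomb_fam n J a f = lincomb_fam n J b f\<close> by (simp flip: lincomb_fam_diff)
  ultimately show "a j = b j" unfolding lin_indep_fam_def by fastforce
qed

lemma lin_indep_fam_not_in_span:
  assumes "lin_indep_fam n J f" "finite J" "j \<in> J" "f j \<in> carrier_vec n"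
  shows "f j \<notin> span_fam n (J - {j}) f"
proof
  assume "f j \<in> span_fam n (J - {j}) f"
  then obtain a where a: "f j = lincomb_fam n (J - {j}) a f" unfolding span_fam_def by blast
  have "lincomb_fam n J (a(j := -1)) f = (-1) \<cdot>\<^sub>v f j + lincomb_fam n (J - {j}) a f"
    using assms by (subst insert_Diff[OF assms(3), symmetric], subst lincomb_fam_insert)
      (auto intro!: lincomb_fam_cong)
  also have "\<dots> = 0\<^sub>v n" unfolding a by (intro eq_vecI) auto
  finally show False using assms(1,3) unfolding lin_indep_fam_def by fastforce
qed

lemma real_scalar_prod_self_eq_0:
  fixes v :: "real vec"
  shows "v \<in> carrier_vec n \<Longrightarrow> v \<bullet> v = 0 \<longleftrightarrow> v = 0\<^sub>v n"
  using conjugate_square_eq_0_vec[of v n] by simp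

lemma add_minus_cancel_left_vec:
  fixes u v :: "real vec"
  shows "u \<in> carrier_vec n \<Longrightarrow> v \<in> carrier_vec n \<Longrightarrow> u + v - u = v"
  by (rule eq_vecI) auto

lemma eq_smult_of_smult_add_eq_0:
  fixes x y :: "real vec"
  assumes "x \<in> carrier_vec n" "y \<in> carrier_vec n" "c \<noteq> 0" "c \<cdot>\<^sub>v x + y = 0\<^sub>v n"
  shows "x = (- 1 / c) \<cdot>\<^sub>v y"
proof (rule eq_vecI)
  fix l assume "l < dim_vec ((- 1 / c) \<cdot>\<^sub>v y)"
  then have l: "l < n" using assms(2) by simp
  have "(c \<cdot>\<^sub>v x + y) $ l = 0" using assms(4) l by simp
  then have "c * x $ l + y $ l = 0" using l assms(1,2) by simp
  then show "x $ l = ((- 1 / c) \<cdot>\<^sub>v y) $ l" using l assms(2,3) by (simp add: field_simps)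
qed (use assms(1,2) in simp)

section \<open>Orthogonal projection onto the complement of a span\<close>

definition is_perp_proj :: "nat \<Rightarrow> 'i set \<Rightarrow> ('i \<Rightarrow> real vec) \<Rightarrow> real vec \<Rightarrow> real vec \<Rightarrow> bool" where
  "is_perp_proj n J f h u \<longleftrightarrow> u \<in> carrier_vec n \<and> (\<forall>j\<in>J. u \<bullet> f j = 0) \<and> h - u \<in> span_fam n J f"

lemma perp_proj_insert:
  assumes s: "s \<notin> J" "finite J" and f: "\<And>j. j \<in> insert s J \<Longrightarrow> f j \<in> carrier_vec n"
    and u: "is_perp_proj n J f h u" and t: "is_perp_proj n J f (f s) t" and h: "h \<in> carrier_vec n"
  shows "is_perp_proj n (insert s J) f h (u - ((u \<bullet> t) / (t \<bullet> t)) \<cdot>\<^sub>v t)"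
proof -
  define c where "c = (u \<bullet> t) / (t \<bullet> t)"
  define u' where "u' = u - c \<cdot>\<^sub>v t"
  have u: "u \<in> carrier_vec n" "\<And>j. j \<in> J \<Longrightarrow> u \<bullet> f j = 0" "h - u \<in> span_fam n J f"
    and t: "t \<in> carrier_vec n" "\<And>j. j \<in> J \<Longrightarrow> t \<bullet> f j = 0" "f s - t \<in> span_fam n J f"
    using u t unfolding is_perp_proj_def by auto
  have f_J: "\<And>j. j \<in> J \<Longrightarrow> f j \<in> carrier_vec n" and f_s: "f s \<in> carrier_vec n" using f by auto
  have span_J: "span_fam n J f \<subseteq> span_fam n (insert s J) f"
    using s by (intro span_fam_mono) auto
  have u'_carrier: "u' \<in> carrier_vec n" unfolding u'_def using u t by simp
  have u'_J: "u' \<bullet> f j = 0" if "j \<in> J" for j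
    unfolding u'_def using u t f_J[OF that] that by (simp add: minus_scalar_prod_distrib[of _ n])
  have "u \<bullet> t = c * (t \<bullet> t)"
  proof (cases "t \<bullet> t = 0")
    case True
    then show ?thesis using t(1) u(1) by (simp add: real_scalar_prod_self_eq_0)
  qed (simp add: c_def)
  then have u'_t: "u' \<bullet> t = 0"
    unfolding u'_def using u t by (simp add: minus_scalar_prod_distrib[of _ n])
  have "u' \<bullet> (f s - t) = 0"
    using orthogonal_span_fam[OF f_J u'_J t(3)] by blast
  then have u'_s: "u' \<bullet> f s = 0"
    using u'_t scalar_prod_minus_distrib[OF u'_carrier f_s t(1)] by simp
  have "f s \<in> span_fam n (insert s J) f"
    using s f_s by (intro span_fam_generator) auto
  moreover have "f s - t \<in> span_fam n (insert s J) f" using t(3) span_J by blast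
  ultimately have "f s - (f s - t) \<in> span_fam n (insert s J) f" by (rule span_fam_diff)
  moreover have "f s - (f s - t) = t" using f_s t(1) by (intro eq_vecI) auto
  ultimately have "t \<in> span_fam n (insert s J) f" by simp
  moreover have "h - u' = (h - u) + c \<cdot>\<^sub>v t"
    unfolding u'_def using u t h by (intro eq_vecI) auto
  ultimately have "h - u' \<in> span_fam n (insert s J) f"
    using u(3) span_J by (auto intro!: span_fam_add span_fam_smult)
  then show ?thesis using u'_carrier u'_J u'_s unfolding is_perp_proj_def u'_def c_def by blast
qed

lemma perp_proj_exists:
  assumes "finite J" "\<And>j. j \<in> J \<Longrightarrow> f j \<in> carrier_vec n" "h \<in> carrier_vec n"
  shows "\<exists>u. is_perp_proj n J f h u"
  using assms
proof (induction J arbitrary: h rule: finite_induct)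
  case empty
  then show ?case using span_fam_zero[of n "{}" f] by (auto simp: is_perp_proj_def intro!: exI[of _ h])
next
  case (insert s J)
  have f_J: "\<And>j. j \<in> J \<Longrightarrow> f j \<in> carrier_vec n" and f_s: "f s \<in> carrier_vec n"
    using insert.prems by auto
  obtain u t where u: "is_perp_proj n J f h u" and t: "is_perp_proj n J f (f s) t"
    using insert.IH[OF f_J insert.prems(2)] insert.IH[OF f_J f_s] by blast
  show ?case
    using perp_proj_insert[OF insert.hyps(2,1) insert.prems(1) u t insert.prems(2)] by (rule exI)
qed

lemma perp_proj_unique:
  assumes "\<And>j. j \<in> J \<Longrightarrow> f j \<in> carrier_vec n" "h \<in> carrier_vec n"
    and "is_perp_proj n J f h u" "is_perp_proj n J f h v"
  shows "u = v"
proof -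
  have u: "u \<in> carrier_vec n" "\<forall>j\<in>J. u \<bullet> f j = 0" "h - u \<in> span_fam n J f"
    and v: "v \<in> carrier_vec n" "\<forall>j\<in>J. v \<bullet> f j = 0" "h - v \<in> span_fam n J f"
    using assms(3,4) unfolding is_perp_proj_def by auto
  have "u - v = (h - v) - (h - u)" using u v assms(2) by (intro eq_vecI) auto
  then have diff_in_span: "u - v \<in> span_fam n J f" using u(3) v(3) by (simp add: span_fam_diff)
  have "u \<bullet> (u - v) = 0" "v \<bullet> (u - v) = 0"
    using orthogonal_span_fam[OF assms(1) _ diff_in_span] u(2) v(2) by auto
  then have "(u - v) \<bullet> (u - v) = 0" using u v by (simp add: minus_scalar_prod_distrib[of _ n])
  then have "u - v = 0\<^sub>v n" using real_scalar_prod_self_eq_0[of "u - v" n] u(1) v(1) by simp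
  show ?thesis
  proof (rule eq_vecI)
    fix i assume "i < dim_vec v"
    then have "(u - v) $ i = 0" using \<open>u - v = 0\<^sub>v n\<close> v(1) by simp
    then show "u $ i = v $ i" using \<open>i < dim_vec v\<close> u(1) v(1) by simp
  qed (use u v in simp)
qed

lemma proj_perp_eq_perp_proj:
  assumes "finite J" "\<And>j. j \<in> J \<Longrightarrow> f j \<in> carrier_vec n" "h \<in> carrier_vec n"
    and "is_perp_proj n J f h u"
  shows "proj_perp n (lin_span n (f ` J)) h = u"
proof -
  have u: "u \<in> carrier_vec n" "\<And>j. j \<in> J \<Longrightarrow> u \<bullet> f j = 0" "h - u \<in> span_fam n J f"
    using assms(4) unfolding is_perp_proj_def by auto
  have W: "lin_span n (f ` J) = span_fam n J f" by (rule lin_span_image_eq_span_fam[OF assms(1,2)])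
  show ?thesis
    unfolding proj_perp_def W
  proof (rule the_equality)
    have "u \<bullet> w = 0" if "w \<in> span_fam n J f" for w
      by (rule orthogonal_span_fam[OF assms(2) u(2) that])
    with u show "u \<in> carrier_vec n \<and> (\<forall>w\<in>span_fam n J f. u \<bullet> w = 0) \<and> h - u \<in> span_fam n J f"
      by simp
  next
    fix v assume v: "v \<in> carrier_vec n \<and> (\<forall>w\<in>span_fam n J f. v \<bullet> w = 0) \<and> h - v \<in> span_fam n J f"
    have "v \<bullet> f j = 0" if "j \<in> J" for j
      using v span_fam_generator[where f = f, OF assms(1) that assms(2)[OF that]] by simp
    with v have "is_perp_proj n J f h v" unfolding is_perp_proj_def by simp
    from perp_proj_unique[OF assms(2,3) this assms(4)] show "v = u" .
  qed
qed

section \<open>The pseudoinverse of a matrix with independent columns\<close>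

lemma gram_mat_inverse_exists:
  fixes A :: "real mat"
  assumes A: "A \<in> carrier_mat n m"
    and inj: "\<And>v. v \<in> carrier_vec m \<Longrightarrow> A *\<^sub>v v = 0\<^sub>v n \<Longrightarrow> v = 0\<^sub>v m"
  obtains G where "G \<in> carrier_mat m m" "G * (transpose_mat A * A) = 1\<^sub>m m" "transpose_mat G = G"
proof -
  define B where "B = transpose_mat A * A"
  have B: "B \<in> carrier_mat m m" and AT: "transpose_mat A \<in> carrier_mat m n"
    unfolding B_def using A by auto
  have B_sym: "transpose_mat B = B" unfolding B_def using transpose_mult[OF AT A] by simp
  have "det B \<noteq> 0"
  proof
    assume "det B = 0"
    then obtain v where v: "v \<in> carrier_vec m" "v \<noteq> 0\<^sub>v m" "B *\<^sub>v v = 0\<^sub>v m"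
      using det_0_iff_vec_prod_zero[OF B] by auto
    have Av: "A *\<^sub>v v \<in> carrier_vec n" using A v(1) by simp
    have "(A *\<^sub>v v) \<bullet> (A *\<^sub>v v) = (transpose_mat A *\<^sub>v (A *\<^sub>v v)) \<bullet> v"
      by (rule transpose_vec_mult_scalar[OF A v(1) Av, symmetric])
    also have "\<dots> = v \<bullet> (B *\<^sub>v v)"
      unfolding B_def using A v(1) by (simp add: comm_scalar_prod[of _ m])
    finally have "A *\<^sub>v v = 0\<^sub>v n" using v(1,3) Av by (simp add: real_scalar_prod_self_eq_0)
    then show False using inj v by blast
  qed
  then have "B \<in> Units (ring_mat TYPE(real) m ())" by (rule det_non_zero_imp_unit[OF B])
  then obtain G where G: "G \<in> carrier_mat m m" "G * B = 1\<^sub>m m" "B * G = 1\<^sub>m m"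
    unfolding Units_def ring_mat_def by auto
  have "transpose_mat G * B = transpose_mat (B * G)"
    using transpose_mult[OF B G(1)] B_sym by simp
  then have GT_B: "transpose_mat G * B = 1\<^sub>m m" using G(3) by simp
  have "transpose_mat G = transpose_mat G * (B * G)" using G by simp
  also have "\<dots> = (transpose_mat G * B) * G"
    by (rule assoc_mult_mat[symmetric]) (use G(1) B in auto)
  also have "\<dots> = G" using GT_B G(1) by simp
  finally show ?thesis using that G(1,2) unfolding B_def by blast
qed

lemma eq_gram_inverse_mult_transpose:
  fixes A :: "real mat"
  assumes A: "A \<in> carrier_mat n m" and G: "G \<in> carrier_mat m m"
    and G_inv: "G * (transpose_mat A * A) = 1\<^sub>m m"
    and Y: "Y \<in> carrier_mat m n" and AYA: "A * Y * A = A" and AY_sym: "transpose_mat (A * Y) = A * Y"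
  shows "Y = G * transpose_mat A"
proof -
  have AT: "transpose_mat A \<in> carrier_mat m n" using A by simp
  have "Y * A = G * (transpose_mat A * A) * (Y * A)" using G_inv Y A by simp
  also have "\<dots> = G * (transpose_mat A * (A * Y * A))"
  proof -
    have "transpose_mat A * A \<in> carrier_mat m m" "Y * A \<in> carrier_mat m m" using AT A Y by auto
    then show ?thesis
      by (simp only: assoc_mult_mat[OF G] assoc_mult_mat[OF AT A] assoc_mult_mat[OF A Y A])
  qed
  also have "\<dots> = 1\<^sub>m m" using AYA G_inv by simp
  finally have YA: "Y * A = 1\<^sub>m m" .
  have "transpose_mat A = transpose_mat (Y * A) * transpose_mat A" using YA AT by simp
  also have "\<dots> = transpose_mat A * transpose_mat (A * Y)"
    using Y A AT by (simp add: transpose_mult[OF Y A] transpose_mult[OF A Y])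
  also have "\<dots> = transpose_mat A * A * Y" using AY_sym AT A Y by simp
  finally have "G * transpose_mat A = G * (transpose_mat A * A * Y)" by simp
  also have "\<dots> = G * (transpose_mat A * A) * Y"
    by (rule assoc_mult_mat[symmetric]) (use G AT A Y in auto)
  finally show "Y = G * transpose_mat A" using G_inv Y by simp
qed

lemma pinv_eq_of_gram_inverse:
  fixes A :: "real mat"
  assumes A: "A \<in> carrier_mat n m" and G: "G \<in> carrier_mat m m"
    and G_inv: "G * (transpose_mat A * A) = 1\<^sub>m m" and G_sym: "transpose_mat G = G"
  shows "pinv A = G * transpose_mat A"
  unfolding pinv_def
proof (rule the_equality)
  have AT: "transpose_mat A \<in> carrier_mat m n" using A by simp
  define X where "X = G * transpose_mat A"
  have X: "X \<in> carrier_mat m n" unfolding X_def using G AT by simp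
  have XA: "X * A = 1\<^sub>m m" unfolding X_def using G AT A G_inv by simp
  have "transpose_mat (A * X) = A * (transpose_mat G * transpose_mat A)"
    unfolding X_def using A G AT by (simp add: transpose_mult[of _ n m _ n] transpose_mult[OF G AT])
  then have "transpose_mat (A * X) = A * X" unfolding G_sym X_def .
  moreover have "A * X * A = A" "X * A * X = X" using A X XA by simp_all
  ultimately show "G * transpose_mat A \<in> carrier_mat (dim_col A) (dim_row A) \<and>
      A * (G * transpose_mat A) * A = A \<and> G * transpose_mat A * A * (G * transpose_mat A) = G * transpose_mat A \<and>
      transpose_mat (A * (G * transpose_mat A)) = A * (G * transpose_mat A) \<and>
      transpose_mat (G * transpose_mat A * A) = G * transpose_mat A * A"
    using X XA A unfolding X_def by simp
next
  fix Y assume "Y \<in> carrier_mat (dim_col A) (dim_row A) \<and> A * Y * A = A \<and> Y * A * Y = Y \<and>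
      transpose_mat (A * Y) = A * Y \<and> transpose_mat (Y * A) = Y * A"
  then show "Y = G * transpose_mat A"
    using eq_gram_inverse_mult_transpose[OF A G G_inv] A by auto
qed

lemma pinv_left_inverse:
  fixes A :: "real mat"
  assumes A: "A \<in> carrier_mat n m"
    and inj: "\<And>v. v \<in> carrier_vec m \<Longrightarrow> A *\<^sub>v v = 0\<^sub>v n \<Longrightarrow> v = 0\<^sub>v m"
  shows "pinv A \<in> carrier_mat m n" and "pinv A * A = 1\<^sub>m m"
proof -
  obtain G where G: "G \<in> carrier_mat m m" "G * (transpose_mat A * A) = 1\<^sub>m m" "transpose_mat G = G"
    using gram_mat_inverse_exists[OF A inj] by blast
  then show "pinv A \<in> carrier_mat m n" "pinv A * A = 1\<^sub>m m"
    using A by (simp_all add: pinv_eq_of_gram_inverse[OF A G])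
qed

section \<open>Full row rank and row submatrices\<close>

lemma row_mult_eq_lincomb_fam:
  assumes "R \<in> carrier_mat n k" "Q \<in> carrier_mat k p" "i < n"
  shows "row (R * Q) i = lincomb_fam p {..<k} (\<lambda>j. R $$ (i, j)) (row Q)"
  by (rule eq_vecI) (use assms in \<open>auto simp: scalar_prod_def atLeast0LessThan intro!: sum.cong\<close>)

lemma (in vec_space) span_cols_eq_carrier_of_full_rank:
  assumes A: "A \<in> carrier_mat n nc" and rk: "rank A = n"
  shows "span (set (cols A)) = carrier_vec n"
proof -
  obtain S where S: "maximal S (\<lambda>T. T \<subseteq> set (cols A) \<and> lin_indpt T)"
    using maximal_exists[of "\<lambda>T. T \<subseteq> set (cols A) \<and> lin_indpt T" "card (set (cols A))" "{}"]
    by (meson List.finite_set card_mono empty_iff empty_subsetI finite_lin_indpt2 rev_finite_subset)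
  have S_cols: "S \<subseteq> set (cols A)" and S_indpt: "lin_indpt S" using S unfolding maximal_def by auto
  have cols_carrier: "set (cols A) \<subseteq> carrier_vec n" using A cols_dim by blast
  have S_finite: "finite S" using S_cols finite_subset by blast
  have "card S = n" using rank_card_indpt[OF A S] rk by simp
  then have "basis S"
    using dim_li_is_basis[OF fin_dim S_finite _ S_indpt] S_cols cols_carrier dim_is_n by auto
  then have "carrier_vec n = span S" unfolding basis_def by simp
  also have "\<dots> \<subseteq> span (set (cols A))" using S_cols by (rule span_is_monotone)
  finally show ?thesis using span_closed[OF cols_carrier] by blast
qed

lemma lin_indep_rows_of_full_rank:
  fixes H :: "real mat"
  assumes H: "H \<in> carrier_mat d p" and rk: "vec_space.rank d H = d"
  shows "lin_indep_fam p {..<d} (row H)"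
  unfolding lin_indep_fam_def
proof (intro allI impI ballI)
  interpret V: vec_space "TYPE(real)" d .
  fix a j assume comb: "lincomb_fam p {..<d} a (row H) = 0\<^sub>v p" and j: "j \<in> {..<d}"
  define c where "c = vec d a"
  have cols_carrier: "set (cols H) \<subseteq> carrier_vec d" using H cols_dim by blast
  \<comment> \<open>the coefficient vector is orthogonal to all columns of H, which span the whole space\<close>
  have "c \<in> V.orthogonal_complement (set (cols H))"
    unfolding V.orthogonal_complement_def
  proof (intro CollectI conjI ballI)
    fix y assume "y \<in> set (cols H)"
    then obtain l where l: "l < p" "y = col H l" using H by (auto simp: in_set_conv_nth)
    have "c \<bullet> y = lincomb_fam p {..<d} a (row H) $ l"
      using H l by (simp add: c_def scalar_prod_def atLeast0LessThan mult.commute)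
    then show "c \<bullet> y = 0" using comb l(1) by simp
  qed (simp add: c_def)
  then have "c \<in> V.orthogonal_complement (carrier_vec d)"
    using V.in_orthogonal_complement_span[OF cols_carrier]
      V.span_cols_eq_carrier_of_full_rank[OF H rk] by simp
  then have "c \<bullet> c = 0" unfolding V.orthogonal_complement_def by blast
  then have "c = 0\<^sub>v d" by (simp add: c_def real_scalar_prod_self_eq_0)
  then show "a j = 0" using j by (metis c_def index_vec index_zero_vec(1) lessThan_iff)
qed

lemma bij_betw_card_less:
  fixes S :: "nat set"
  shows "bij_betw (\<lambda>j. card {a \<in> S. a < j}) {a. a < n \<and> a \<in> S} {..<card {a. a < n \<and> a \<in> S}}"
  (is "bij_betw ?idx ?S' {..<?m}")
proof -
  have inj: "inj_on ?idx ?S'" by (rule inj_on_inverseI[where g = "pick S"]) (simp add: pick_card_in_set)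
  have "?idx ` ?S' \<subseteq> {..<?m}"
  proof
    fix k assume "k \<in> ?idx ` ?S'"
    then obtain j where j: "j \<in> ?S'" "k = ?idx j" by blast
    then have "{a \<in> S. a < j} \<subset> ?S'" by auto
    then show "k \<in> {..<?m}" using j(2) by (simp add: psubset_card_mono)
  qed
  moreover have "card (?idx ` ?S') = card {..<?m}" using card_image[OF inj] by simp
  ultimately have "?idx ` ?S' = {..<?m}" by (intro card_subset_eq) auto
  with inj show ?thesis unfolding bij_betw_def by blast
qed

lemma transpose_submatrix_rows_mult_vec:
  fixes M :: "real mat"
  assumes M: "M \<in> carrier_mat n p" and v: "v \<in> carrier_vec (card {a. a < n \<and> a \<in> S})"
  shows "transpose_mat (submatrix M S UNIV) *\<^sub>v v =
    lincomb_fam p {a. a < n \<and> a \<in> S} (\<lambda>j. v $ card {a \<in> S. a < j}) (row M)"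
    (is "?A *\<^sub>v v = lincomb_fam p ?S' (\<lambda>j. v $ ?idx j) _")
proof (rule eq_vecI)
  let ?m = "card ?S'"
  have A: "?A \<in> carrier_mat p ?m" using M by (intro carrier_matI) (simp_all add: dim_submatrix)
  have entry: "submatrix M S UNIV $$ (?idx j, l) = M $$ (j, l)" if "j \<in> ?S'" "l < p" for j l
    using submatrix_index_card[of j M l S UNIV] that M by simp
  fix l assume "l < dim_vec (lincomb_fam p ?S' (\<lambda>j. v $ ?idx j) (row M))"
  then have l: "l < p" by simp
  have "(?A *\<^sub>v v) $ l = (\<Sum>k<?m. submatrix M S UNIV $$ (k, l) * v $ k)"
    using A v l by (simp add: scalar_prod_def atLeast0LessThan)
  also have "\<dots> = (\<Sum>j\<in>?S'. submatrix M S UNIV $$ (?idx j, l) * v $ ?idx j)"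
    by (rule sum.reindex_bij_betw[OF bij_betw_card_less, symmetric])
  also have "\<dots> = (\<Sum>j\<in>?S'. v $ ?idx j * row M j $ l)"
    using entry M l by (intro sum.cong) auto
  finally show "(?A *\<^sub>v v) $ l = lincomb_fam p ?S' (\<lambda>j. v $ ?idx j) (row M) $ l" using l by simp
next
  show "dim_vec (transpose_mat (submatrix M S UNIV) *\<^sub>v v) =
      dim_vec (lincomb_fam p ?S' (\<lambda>j. v $ ?idx j) (row M))"
    using M by (simp add: dim_submatrix)
qed

section \<open>Existence of the partial order RQ decomposition\<close>

definition succs :: "nat \<Rightarrow> (nat \<Rightarrow> nat \<Rightarrow> bool) \<Rightarrow> nat \<Rightarrow> nat set" where
  "succs d lt i = {j. j < d \<and> lt i j}"

abbreviation upper_set :: "(nat \<Rightarrow> nat \<Rightarrow> bool) \<Rightarrow> nat \<Rightarrow> nat set" where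
  "upper_set lt i \<equiv> {a. lt i a \<or> a = i}"

lemma lin_span_succs:
  assumes "\<And>j. j \<in> succs d lt i \<Longrightarrow> f j \<in> carrier_vec n"
  shows "lin_span n {f j | j. j < d \<and> lt i j} = span_fam n (succs d lt i) f"
proof -
  have "{f j | j. j < d \<and> lt i j} = f ` succs d lt i" unfolding succs_def by blast
  moreover have "finite (succs d lt i)" unfolding succs_def by simp
  ultimately show ?thesis using lin_span_image_eq_span_fam[of "succs d lt i" f n] assms by simp
qed

text \<open>The paper defines \<open>q\<^sub>i\<close> through \<open>W\<^sub>i = \<langle>q\<^sub>j : j \<succ> i\<rangle>\<close>. Since the successors of \<open>i\<close> form an
  up-closed set, \<open>W\<^sub>i\<close> is also spanned by the rows \<open>h\<^sub>j\<close>, \<open>j \<succ> i\<close>, which gives a non-recursive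
  definition.\<close>

definition po_perp :: "real mat \<Rightarrow> (nat \<Rightarrow> nat \<Rightarrow> bool) \<Rightarrow> nat \<Rightarrow> real vec" where
  "po_perp H lt i = proj_perp (dim_col H)
     (lin_span (dim_col H) (row H ` succs (dim_row H) lt i)) (row H i)"

definition po_q :: "real mat \<Rightarrow> (nat \<Rightarrow> nat \<Rightarrow> bool) \<Rightarrow> nat \<Rightarrow> real vec" where
  "po_q H lt i = (1 / vnorm (po_perp H lt i)) \<cdot>\<^sub>v po_perp H lt i"

definition po_coeff :: "real mat \<Rightarrow> (nat \<Rightarrow> nat \<Rightarrow> bool) \<Rightarrow> nat \<Rightarrow> nat \<Rightarrow> real" where
  "po_coeff H lt i = (SOME a. row H i - po_perp H lt i =
     lincomb_fam (dim_col H) (succs (dim_row H) lt i) a (po_q H lt))"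

definition poQ :: "real mat \<Rightarrow> (nat \<Rightarrow> nat \<Rightarrow> bool) \<Rightarrow> real mat" where
  "poQ H lt = mat (dim_row H) (dim_col H) (\<lambda>(i, l). po_q H lt i $ l)"

definition poR :: "real mat \<Rightarrow> (nat \<Rightarrow> nat \<Rightarrow> bool) \<Rightarrow> real mat" where
  "poR H lt = mat (dim_row H) (dim_row H) (\<lambda>(i, j).
     if j = i then vnorm (po_perp H lt i)
     else if j \<in> succs (dim_row H) lt i then po_coeff H lt i j else 0)"

context
  fixes H :: "real mat" and lt :: "nat \<Rightarrow> nat \<Rightarrow> bool" and d p :: nat
  assumes H: "H \<in> carrier_mat d p" and rank_H: "vec_space.rank d H = d" and po: "strict_po_on d lt"
begin

lemma dim_row_H [simp]: "dim_row H = d" and dim_col_H [simp]: "dim_col H = p"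
  using H by auto

lemma row_H_carrier [simp]: "row H j \<in> carrier_vec p"
  using row_carrier[of H j] unfolding dim_col_H .

lemma finite_succs [simp]: "finite (succs d lt i)"
  unfolding succs_def by simp

lemma succs_subset: "succs d lt i \<subseteq> {..<d}"
  unfolding succs_def by auto

lemma lt_irrefl: "i < d \<Longrightarrow> \<not> lt i i"
  using po[unfolded strict_po_on_def, THEN conjunct1] by blast

lemma lt_trans: "i < d \<Longrightarrow> j < d \<Longrightarrow> k < d \<Longrightarrow> lt i j \<Longrightarrow> lt j k \<Longrightarrow> lt i k"
  using po[unfolded strict_po_on_def, THEN conjunct2] by blast

lemma not_in_succs: "i < d \<Longrightarrow> i \<notin> succs d lt i"
  using lt_irrefl unfolding succs_def by blast

lemma asymp_on_lt: "asymp_on {..<d} lt"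
proof (rule asymp_onI)
  fix x y assume "x \<in> {..<d}" "y \<in> {..<d}" "lt x y"
  then show "\<not> lt y x" using lt_trans[of x y x] lt_irrefl[of x] by auto
qed

lemma transp_on_lt: "transp_on {..<d} lt"
proof (rule transp_onI)
  fix x y z assume "x \<in> {..<d}" "y \<in> {..<d}" "z \<in> {..<d}" "lt x y" "lt y z"
  then show "lt x z" using lt_trans[of x y z] by simp
qed

lemma succs_trans:
  assumes "i < d" "j \<in> succs d lt i"
  shows "insert j (succs d lt j) \<subseteq> succs d lt i"
proof
  fix k assume "k \<in> insert j (succs d lt j)"
  moreover have "k \<in> succs d lt i" if "k \<in> succs d lt j"
  proof -
    have "j < d" "lt i j" "k < d" "lt j k" using assms(2) that unfolding succs_def by auto
    then show ?thesis using lt_trans assms(1) unfolding succs_def by blast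
  qed
  ultimately show "k \<in> succs d lt i" using assms(2) by blast
qed

lemma card_succs_less:
  assumes "i < d" "j \<in> succs d lt i"
  shows "card (succs d lt j) < card (succs d lt i)"
proof (rule psubset_card_mono[OF finite_succs])
  have "j \<notin> succs d lt j" using assms(2) succs_subset not_in_succs by blast
  then show "succs d lt j \<subset> succs d lt i" using succs_trans[OF assms] by blast
qed

lemma po_perp_is_perp_proj:
  assumes "i < d"
  shows "is_perp_proj p (succs d lt i) (row H) (row H i) (po_perp H lt i)"
proof -
  obtain u where u: "is_perp_proj p (succs d lt i) (row H) (row H i) u"
    using perp_proj_exists[of "succs d lt i" "row H" p "row H i"] by auto
  have "po_perp H lt i = u"
    unfolding po_perp_def by (simp add: proj_perp_eq_perp_proj[OF finite_succs _ _ u])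
  then show ?thesis using u by simp
qed

lemma po_perp_carrier [simp]: "i < d \<Longrightarrow> po_perp H lt i \<in> carrier_vec p"
  and po_perp_orthogonal: "i < d \<Longrightarrow> j \<in> succs d lt i \<Longrightarrow> po_perp H lt i \<bullet> row H j = 0"
  and row_minus_po_perp: "i < d \<Longrightarrow> row H i - po_perp H lt i \<in> span_fam p (succs d lt i) (row H)"
  using po_perp_is_perp_proj unfolding is_perp_proj_def by auto

lemma row_not_in_span_others: "i < d \<Longrightarrow> row H i \<notin> span_fam p ({..<d} - {i}) (row H)"
  using lin_indep_fam_not_in_span[OF lin_indep_rows_of_full_rank[OF H rank_H]] by simp

lemma span_succs_subset_others: "i < d \<Longrightarrow> span_fam p (succs d lt i) f \<subseteq> span_fam p ({..<d} - {i}) f"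
  using succs_subset not_in_succs by (intro span_fam_mono) auto

lemma po_perp_norm_pos: "i < d \<Longrightarrow> vnorm (po_perp H lt i) > 0"
proof -
  assume i: "i < d"
  have "po_perp H lt i \<noteq> 0\<^sub>v p"
  proof
    assume "po_perp H lt i = 0\<^sub>v p"
    then have "row H i \<in> span_fam p (succs d lt i) (row H)" using row_minus_po_perp[OF i] by simp
    then show False using row_not_in_span_others[OF i] span_succs_subset_others[OF i] by blast
  qed
  then show ?thesis
    using real_scalar_prod_self_eq_0[OF po_perp_carrier[OF i]] conjugate_square_ge_0_vec[of "po_perp H lt i"]
    unfolding vnorm_def by (simp add: order_le_less)
qed

lemma po_q_carrier [simp]: "i < d \<Longrightarrow> po_q H lt i \<in> carrier_vec p"
  unfolding po_q_def by simp

lemma vnorm_po_q: "i < d \<Longrightarrow> vnorm (po_q H lt i) = 1"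
  using po_perp_norm_pos[of i] unfolding po_q_def vnorm_def by (simp add: real_sqrt_mult)

lemma po_perp_eq_smult_po_q: "i < d \<Longrightarrow> po_perp H lt i = vnorm (po_perp H lt i) \<cdot>\<^sub>v po_q H lt i"
  using po_perp_norm_pos[of i] unfolding po_q_def by (intro eq_vecI) auto

lemma po_q_in_span_rows: "i < d \<Longrightarrow> po_q H lt i \<in> span_fam p (insert i (succs d lt i)) (row H)"
proof -
  assume i: "i < d"
  have "row H i \<in> span_fam p (insert i (succs d lt i)) (row H)"
    by (rule span_fam_generator) auto
  moreover have "row H i - po_perp H lt i \<in> span_fam p (insert i (succs d lt i)) (row H)"
    using row_minus_po_perp[OF i] span_fam_mono[of "insert i (succs d lt i)" "succs d lt i"] by auto
  ultimately have "row H i - (row H i - po_perp H lt i) \<in> span_fam p (insert i (succs d lt i)) (row H)"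
    by (rule span_fam_diff)
  moreover have "row H i - (row H i - po_perp H lt i) = po_perp H lt i"
    using po_perp_carrier[OF i] by (intro eq_vecI) auto
  ultimately show ?thesis unfolding po_q_def by (simp add: span_fam_smult)
qed

lemma po_q_orthogonal:
  assumes i: "i < d" and j: "j \<in> succs d lt i"
  shows "po_q H lt i \<bullet> po_q H lt j = 0"
proof -
  have "j < d" using j succs_subset by auto
  then have "po_q H lt j \<in> span_fam p (succs d lt i) (row H)"
    using po_q_in_span_rows span_fam_mono[OF finite_succs succs_trans[OF i j]] by blast
  then have "po_perp H lt i \<bullet> po_q H lt j = 0"
    using orthogonal_span_fam[of "succs d lt i" "row H" p] po_perp_orthogonal[OF i] by auto
  then show ?thesis
    unfolding po_q_def[of H lt i]
    using smult_scalar_prod_distrib[OF po_perp_carrier[OF i] po_q_carrier[OF \<open>j < d\<close>]] by simp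
qed

lemma row_in_span_po_q: "i < d \<Longrightarrow> row H i \<in> span_fam p (insert i (succs d lt i)) (po_q H lt)"
proof (induction "card (succs d lt i)" arbitrary: i rule: less_induct)
  case less
  note i = \<open>i < d\<close>
  let ?J = "insert i (succs d lt i)"
  have span_succs: "span_fam p (succs d lt i) (po_q H lt) \<subseteq> span_fam p ?J (po_q H lt)"
    by (rule span_fam_mono) auto
  have "row H k \<in> span_fam p (succs d lt i) (po_q H lt)" if k: "k \<in> succs d lt i" for k
  proof -
    have "k < d" using k succs_subset by auto
    then have "row H k \<in> span_fam p (insert k (succs d lt k)) (po_q H lt)"
      using less.hyps[OF card_succs_less[OF i k]] by blast
    then show ?thesis using span_fam_mono[OF finite_succs succs_trans[OF i k]] by blast
  qed
  then have "row H i - po_perp H lt i \<in> span_fam p ?J (po_q H lt)"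
    using span_fam_subset[of "succs d lt i" "row H"] row_minus_po_perp[OF i] span_succs by blast
  moreover have "po_perp H lt i \<in> span_fam p ?J (po_q H lt)"
    using po_perp_eq_smult_po_q[OF i] span_fam_generator[of ?J i "po_q H lt" p] i
    by (metis finite_insert finite_succs insertI1 po_q_carrier span_fam_smult)
  ultimately have "po_perp H lt i + (row H i - po_perp H lt i) \<in> span_fam p ?J (po_q H lt)"
    by (intro span_fam_add)
  moreover have "po_perp H lt i + (row H i - po_perp H lt i) = row H i"
    using po_perp_carrier[OF i] by (intro eq_vecI) auto
  ultimately show ?case by simp
qed

lemma span_succs_rows_eq_po_q:
  assumes i: "i < d"
  shows "span_fam p (succs d lt i) (row H) = span_fam p (succs d lt i) (po_q H lt)"
proof
  have in_succs: "insert k (succs d lt k) \<subseteq> succs d lt i" if "k \<in> succs d lt i" for k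
    using succs_trans[OF i that] .
  have "k < d" if "k \<in> succs d lt i" for k using that succs_subset by auto
  then show "span_fam p (succs d lt i) (row H) \<subseteq> span_fam p (succs d lt i) (po_q H lt)"
    using row_in_span_po_q span_fam_mono[OF finite_succs in_succs] by (intro span_fam_subset) blast
  show "span_fam p (succs d lt i) (po_q H lt) \<subseteq> span_fam p (succs d lt i) (row H)"
    using \<open>\<And>k. k \<in> succs d lt i \<Longrightarrow> k < d\<close> po_q_in_span_rows span_fam_mono[OF finite_succs in_succs]
    by (intro span_fam_subset) blast
qed

lemma row_minus_po_perp_eq_lincomb: "i < d \<Longrightarrow>
    row H i - po_perp H lt i = lincomb_fam p (succs d lt i) (po_coeff H lt i) (po_q H lt)"
proof -
  assume i: "i < d"
  then have "\<exists>a. row H i - po_perp H lt i = lincomb_fam p (succs d lt i) a (po_q H lt)"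
    using row_minus_po_perp[OF i] span_succs_rows_eq_po_q[OF i] unfolding span_fam_def by auto
  then show ?thesis unfolding po_coeff_def dim_row_H dim_col_H by (rule someI_ex)
qed

lemma poQ_carrier: "poQ H lt \<in> carrier_mat d p"
  unfolding poQ_def by simp

lemma row_poQ:
  assumes "i < d"
  shows "row (poQ H lt) i = po_q H lt i"
proof (rule eq_vecI)
  have "dim_vec (po_q H lt i) = p" using po_q_carrier[OF assms] carrier_vecD by blast
  then show "dim_vec (row (poQ H lt) i) = dim_vec (po_q H lt i)" unfolding poQ_def by simp
  fix l assume "l < dim_vec (po_q H lt i)"
  then have "l < p" using \<open>dim_vec (po_q H lt i) = p\<close> by simp
  then show "row (poQ H lt) i $ l = po_q H lt i $ l"
    unfolding poQ_def using assms by simp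
qed

lemma poR_carrier: "poR H lt \<in> carrier_mat d d"
  unfolding poR_def by simp

lemma index_poR: "i < d \<Longrightarrow> j < d \<Longrightarrow> poR H lt $$ (i, j) =
    (if j = i then vnorm (po_perp H lt i) else if j \<in> succs d lt i then po_coeff H lt i j else 0)"
  unfolding poR_def by simp

lemma row_poR_mult_poQ:
  assumes "i < d"
  shows "row (poR H lt * poQ H lt) i = lincomb_fam p {..<d} (\<lambda>j. poR H lt $$ (i, j)) (po_q H lt)"
proof -
  have "row (poR H lt * poQ H lt) i = lincomb_fam p {..<d} (\<lambda>j. poR H lt $$ (i, j)) (row (poQ H lt))"
    by (rule row_mult_eq_lincomb_fam[OF poR_carrier poQ_carrier assms])
  also have "\<dots> = lincomb_fam p {..<d} (\<lambda>j. poR H lt $$ (i, j)) (po_q H lt)"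
    by (rule lincomb_fam_cong) (simp_all add: row_poQ)
  finally show ?thesis .
qed

lemma poR_mult_poQ: "poR H lt * poQ H lt = H"
proof (rule eq_rowI)
  fix i assume "i < dim_row H"
  then have i: "i < d" by simp
  have succs_d: "j < d" if "j \<in> succs d lt i" for j using that succs_subset by auto
  have "lincomb_fam p {..<d} (\<lambda>j. poR H lt $$ (i, j)) (po_q H lt)
      = lincomb_fam p (insert i (succs d lt i)) (\<lambda>j. poR H lt $$ (i, j)) (po_q H lt)"
    using i succs_subset by (intro lincomb_fam_mono_neutral) (auto simp: index_poR)
  also have "\<dots> = poR H lt $$ (i, i) \<cdot>\<^sub>v po_q H lt i
      + lincomb_fam p (succs d lt i) (\<lambda>j. poR H lt $$ (i, j)) (po_q H lt)"
    using not_in_succs[OF i] po_q_carrier[OF i] by (intro lincomb_fam_insert) auto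
  also have "lincomb_fam p (succs d lt i) (\<lambda>j. poR H lt $$ (i, j)) (po_q H lt)
      = lincomb_fam p (succs d lt i) (po_coeff H lt i) (po_q H lt)"
    using not_in_succs[OF i] by (intro lincomb_fam_cong) (auto simp: index_poR[OF i] succs_d)
  also have "poR H lt $$ (i, i) \<cdot>\<^sub>v po_q H lt i = po_perp H lt i"
    using po_perp_eq_smult_po_q[OF i] by (simp add: index_poR[OF i i])
  also have "po_perp H lt i + lincomb_fam p (succs d lt i) (po_coeff H lt i) (po_q H lt) = row H i"
    unfolding row_minus_po_perp_eq_lincomb[OF i, symmetric] using po_perp_carrier[OF i] by (intro eq_vecI) auto
  finally show "row (poR H lt * poQ H lt) i = row H i" using row_poR_mult_poQ[OF i] by simp
qed (use poR_carrier poQ_carrier in auto)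

lemma is_poRQ_poR_poQ: "is_poRQ d p lt H (poR H lt) (poQ H lt)"
  unfolding is_poRQ_def
proof (intro conjI allI impI ballI)
  show "H = poR H lt * poQ H lt" by (simp add: poR_mult_poQ)
  fix i assume i: "i < d"
  show "0 \<le> poR H lt $$ (i, i)" using po_perp_norm_pos[OF i] by (simp add: index_poR[OF i i])
  show "vnorm (row (poQ H lt) i) = 1" using vnorm_po_q[OF i] by (simp add: row_poQ[OF i])
  show "poR H lt $$ (i, j) = 0" if "j < d" "\<not> (lt i j \<or> i = j)" for j
    using that by (simp add: index_poR[OF i] succs_def)
  fix v assume "v \<in> lin_span p {row (poQ H lt) j | j. j < d \<and> lt i j}"
  also have "lin_span p {row (poQ H lt) j | j. j < d \<and> lt i j} = span_fam p (succs d lt i) (row (poQ H lt))"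
    by (rule lin_span_succs) (metis row_carrier carrier_matD(2) poQ_carrier)
  also have "\<dots> = span_fam p (succs d lt i) (po_q H lt)"
    by (rule span_fam_cong) (simp add: row_poQ succs_def)
  finally have "po_q H lt i \<bullet> v = 0"
  proof (rule orthogonal_span_fam[rotated 2])
    fix j assume j: "j \<in> succs d lt i"
    then have "j < d" using succs_subset by blast
    then show "po_q H lt j \<in> carrier_vec p" by simp
    show "po_q H lt i \<bullet> po_q H lt j = 0" using po_q_orthogonal[OF i j] .
  qed
  then show "row (poQ H lt) i \<bullet> v = 0" by (simp add: row_poQ[OF i])
qed (use poR_carrier poQ_carrier in auto)

section \<open>Uniqueness\<close>

lemma po_q_not_in_span_others:
  assumes i: "i < d"
  shows "po_q H lt i \<notin> span_fam p ({..<d} - {i}) (row H)"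
proof
  let ?others = "span_fam p ({..<d} - {i}) (row H)"
  assume "po_q H lt i \<in> ?others"
  then have "po_perp H lt i \<in> ?others"
    by (subst po_perp_eq_smult_po_q[OF i]) (rule span_fam_smult)
  moreover have "row H i - po_perp H lt i \<in> ?others"
    using row_minus_po_perp[OF i] span_succs_subset_others[OF i] by blast
  ultimately have "po_perp H lt i + (row H i - po_perp H lt i) \<in> ?others"
    by (rule span_fam_add)
  moreover have "po_perp H lt i + (row H i - po_perp H lt i) = row H i"
    using po_perp_carrier[OF i] by (intro eq_vecI) auto
  ultimately show False using row_not_in_span_others[OF i] by simp
qed

lemma lincomb_po_q_in_span_others:
  assumes "K \<subseteq> {..<d} - {m}" and no_pred: "\<And>k. k \<in> K \<Longrightarrow> \<not> lt k m"
  shows "lincomb_fam p K a (po_q H lt) \<in> span_fam p ({..<d} - {m}) (row H)"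
proof -
  have "po_q H lt k \<in> span_fam p ({..<d} - {m}) (row H)" if k: "k \<in> K" for k
  proof -
    have "insert k (succs d lt k) \<subseteq> {..<d} - {m}"
      using k assms(1) no_pred[OF k] succs_subset unfolding succs_def by auto
    then have "span_fam p (insert k (succs d lt k)) (row H) \<subseteq> span_fam p ({..<d} - {m}) (row H)"
      by (intro span_fam_mono) auto
    then show ?thesis using po_q_in_span_rows k assms(1) by blast
  qed
  then show ?thesis using span_fam_subset[of K "po_q H lt"] lincomb_fam_in_span by blast
qed

lemma lin_indep_po_q: "lin_indep_fam p {..<d} (po_q H lt)"
  unfolding lin_indep_fam_def
proof (intro allI impI, rule ccontr)
  fix a assume comb: "lincomb_fam p {..<d} a (po_q H lt) = 0\<^sub>v p" and "\<not> (\<forall>j\<in>{..<d}. a j = 0)"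
  \<comment> \<open>a \<open>\<prec>\<close>-minimal index with non-zero coefficient: no other \<open>q\<^sub>k\<close> in the combination involves \<open>h\<^sub>m\<close>\<close>
  then obtain m where m: "m < d" "a m \<noteq> 0" and min: "\<And>k. k < d \<Longrightarrow> lt k m \<Longrightarrow> a k = 0"
    using Finite_Set.bex_min_element_with_property[OF _ asymp_on_lt transp_on_lt, of "\<lambda>k. a k \<noteq> 0"]
    by auto
  let ?K = "{k. k < d \<and> k \<noteq> m \<and> a k \<noteq> 0}"
  have "lincomb_fam p {..<d} a (po_q H lt) = lincomb_fam p (insert m ?K) a (po_q H lt)"
    using m by (intro lincomb_fam_mono_neutral) auto
  also have "\<dots> = a m \<cdot>\<^sub>v po_q H lt m + lincomb_fam p ?K a (po_q H lt)"
    using m by (intro lincomb_fam_insert) auto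
  finally have "a m \<cdot>\<^sub>v po_q H lt m + lincomb_fam p ?K a (po_q H lt) = 0\<^sub>v p" using comb by simp
  then have "po_q H lt m = (- 1 / a m) \<cdot>\<^sub>v lincomb_fam p ?K a (po_q H lt)"
    by (rule eq_smult_of_smult_add_eq_0[OF po_q_carrier[OF m(1)] lincomb_fam_carrier m(2)])
  moreover have "lincomb_fam p ?K a (po_q H lt) \<in> span_fam p ({..<d} - {m}) (row H)"
    using min by (intro lincomb_po_q_in_span_others) auto
  ultimately have "po_q H lt m \<in> span_fam p ({..<d} - {m}) (row H)"
    by (simp add: span_fam_smult)
  then show False using po_q_not_in_span_others[OF m(1)] by contradiction
qed

lemma row_decomp_of_is_poRQ:
  assumes RQ: "is_poRQ d p lt H R Q" and i: "i < d"
  shows "row H i = R $$ (i, i) \<cdot>\<^sub>v row Q i + lincomb_fam p (succs d lt i) (\<lambda>j. R $$ (i, j)) (row Q)"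
proof -
  have R: "R \<in> carrier_mat d d" and Q: "Q \<in> carrier_mat d p" and "H = R * Q"
    and R_zero: "\<And>j. j < d \<Longrightarrow> \<not> (lt i j \<or> i = j) \<Longrightarrow> R $$ (i, j) = 0"
    using RQ i unfolding is_poRQ_def by auto
  have "row H i = lincomb_fam p {..<d} (\<lambda>j. R $$ (i, j)) (row Q)"
    using row_mult_eq_lincomb_fam[OF R Q i] \<open>H = R * Q\<close> by simp
  also have "\<dots> = lincomb_fam p (insert i (succs d lt i)) (\<lambda>j. R $$ (i, j)) (row Q)"
    using i succs_subset R_zero by (intro lincomb_fam_mono_neutral) (auto simp: succs_def)
  also have "\<dots> = R $$ (i, i) \<cdot>\<^sub>v row Q i + lincomb_fam p (succs d lt i) (\<lambda>j. R $$ (i, j)) (row Q)"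
    using not_in_succs[OF i] Q by (intro lincomb_fam_insert) auto
  finally show ?thesis .
qed

lemma is_perp_proj_of_is_poRQ:
  assumes RQ: "is_poRQ d p lt H R Q" and i: "i < d"
    and Q_succs: "\<And>j. j \<in> succs d lt i \<Longrightarrow> row Q j = po_q H lt j"
  shows "is_perp_proj p (succs d lt i) (row H) (row H i) (R $$ (i, i) \<cdot>\<^sub>v row Q i)"
  unfolding is_perp_proj_def
proof (intro conjI ballI)
  let ?u = "R $$ (i, i) \<cdot>\<^sub>v row Q i"
  have Q: "Q \<in> carrier_mat d p"
    and Q_orth: "\<And>v. v \<in> lin_span p {row Q j | j. j < d \<and> lt i j} \<Longrightarrow> row Q i \<bullet> v = 0"
    using RQ i unfolding is_poRQ_def by auto
  have row_Q_carrier: "row Q j \<in> carrier_vec p" for j using row_carrier[of Q j] Q by simp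
  then show u_carrier: "?u \<in> carrier_vec p" by simp
  have "span_fam p (succs d lt i) (row Q) = span_fam p (succs d lt i) (po_q H lt)"
    by (rule span_fam_cong) (rule Q_succs)
  then have span_Q: "span_fam p (succs d lt i) (row Q) = span_fam p (succs d lt i) (row H)"
    using span_succs_rows_eq_po_q[OF i] by simp
  let ?L = "lincomb_fam p (succs d lt i) (\<lambda>j. R $$ (i, j)) (po_q H lt)"
  have "lincomb_fam p (succs d lt i) (\<lambda>j. R $$ (i, j)) (row Q) = ?L"
    by (rule lincomb_fam_cong) (simp_all add: Q_succs)
  then have "row H i = ?u + ?L" using row_decomp_of_is_poRQ[OF RQ i] by simp
  then have "row H i - ?u = ?L" using u_carrier by (simp add: add_minus_cancel_left_vec)
  then show "row H i - ?u \<in> span_fam p (succs d lt i) (row H)"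
    using span_succs_rows_eq_po_q[OF i] by simp
  fix k assume "k \<in> succs d lt i"
  then have "row H k \<in> span_fam p (succs d lt i) (row Q)"
    unfolding span_Q by (intro span_fam_generator) auto
  then have "row Q i \<bullet> row H k = 0"
    using Q_orth lin_span_succs[of d lt i "row Q" p] row_Q_carrier by auto
  then show "?u \<bullet> row H k = 0"
    using smult_scalar_prod_distrib[OF row_Q_carrier row_H_carrier] by simp
qed

lemma row_eq_po_q_of_is_poRQ:
  assumes RQ: "is_poRQ d p lt H R Q"
  shows "i < d \<Longrightarrow> row Q i = po_q H lt i"
proof (induction "card (succs d lt i)" arbitrary: i rule: less_induct)
  case less
  note i = \<open>i < d\<close>
  have Q: "Q \<in> carrier_mat d p" and R_ii: "R $$ (i, i) \<ge> 0" and norm_Q: "vnorm (row Q i) = 1"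
    using RQ i unfolding is_poRQ_def by auto
  have row_Q_carrier: "row Q i \<in> carrier_vec p" using row_carrier[of Q i] Q by simp
  have "row Q j = po_q H lt j" if "j \<in> succs d lt i" for j
    using less.hyps[OF card_succs_less[OF i that]] that succs_subset by blast
  \<comment> \<open>the first summand of the decomposition of \<open>h\<^sub>i\<close> is its projection onto \<open>W\<^sub>i\<^sup>\<bottom>\<close>\<close>
  with perp_proj_unique[OF row_H_carrier row_H_carrier _ po_perp_is_perp_proj[OF i]]
  have u: "R $$ (i, i) \<cdot>\<^sub>v row Q i = po_perp H lt i"
    using is_perp_proj_of_is_poRQ[OF RQ i] by blast
  have "vnorm (R $$ (i, i) \<cdot>\<^sub>v row Q i) = R $$ (i, i)"
    unfolding vnorm_def using row_Q_carrier norm_Q R_ii by (simp add: real_sqrt_mult vnorm_def)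
  then have "R $$ (i, i) = vnorm (po_perp H lt i)" unfolding u by simp
  then show "row Q i = po_q H lt i"
    using po_perp_norm_pos[OF i] row_Q_carrier unfolding po_q_def u[symmetric]
    by (intro eq_vecI) auto
qed

lemma is_poRQ_unique:
  assumes RQ: "is_poRQ d p lt H R Q"
  shows "R = poR H lt \<and> Q = poQ H lt"
proof
  have R: "R \<in> carrier_mat d d" and Q: "Q \<in> carrier_mat d p" and "H = R * Q"
    using RQ unfolding is_poRQ_def by auto
  have row_Q: "row Q i = po_q H lt i" if "i < d" for i
    using row_eq_po_q_of_is_poRQ[OF RQ that] .
  show "Q = poQ H lt"
  proof (rule eq_rowI)
    fix i assume "i < dim_row (poQ H lt)"
    then have "i < d" using poQ_carrier by simp
    then show "row Q i = row (poQ H lt) i" by (simp add: row_Q row_poQ)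
  qed (use Q poQ_carrier in auto)
  show "R = poR H lt"
  proof (rule eq_rowI)
    fix i assume "i < dim_row (poR H lt)"
    then have i: "i < d" using poR_carrier by simp
    have "lincomb_fam p {..<d} (\<lambda>j. R $$ (i, j)) (po_q H lt)
        = lincomb_fam p {..<d} (\<lambda>j. R $$ (i, j)) (row Q)"
      by (rule lincomb_fam_cong) (simp_all add: row_Q)
    also have "\<dots> = row H i"
      unfolding \<open>H = R * Q\<close> by (rule row_mult_eq_lincomb_fam[OF R Q i, symmetric])
    also have "\<dots> = lincomb_fam p {..<d} (\<lambda>j. poR H lt $$ (i, j)) (po_q H lt)"
      using row_poR_mult_poQ[OF i] poR_mult_poQ by simp
    finally have "R $$ (i, j) = poR H lt $$ (i, j)" if "j < d" for j
      using lin_indep_fam_coeffs_eq[OF lin_indep_po_q] that by blast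
    then show "row R i = row (poR H lt) i" using R poR_carrier i by (intro eq_vecI) auto
  qed (use R poR_carrier in auto)
qed

section \<open>Correctness of the procedure\<close>

lemma qsteps_eq_po_q:
  assumes consistent: "\<forall>i<d. \<forall>j<d. lt i j \<longrightarrow> i < j"
  shows "k \<le> d \<Longrightarrow> d - k \<le> i \<Longrightarrow> i < d \<Longrightarrow> qsteps lt H k i = po_q H lt i"
proof (induction k arbitrary: i)
  case (Suc k)
  define i0 where "i0 = d - Suc k"
  have i0: "i0 < d" using Suc.prems unfolding i0_def by simp
  \<comment> \<open>the successors of \<open>i0\<close> come later in \<open>1, \<dots>, d\<close>, so their rows are already computed\<close>
  have computed: "qsteps lt H k j = po_q H lt j" if "j \<in> succs d lt i0" for j
  proof -
    have "j < d" "i0 < j" using that consistent i0 unfolding succs_def by auto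
    then show ?thesis using Suc.IH[of j] Suc.prems unfolding i0_def by simp
  qed
  have "lin_span p {qsteps lt H k j | j. j < d \<and> lt i0 j} = span_fam p (succs d lt i0) (qsteps lt H k)"
    by (rule lin_span_succs) (simp add: computed succs_def)
  also have "\<dots> = span_fam p (succs d lt i0) (row H)"
    using span_fam_cong[of "succs d lt i0" "qsteps lt H k" "po_q H lt" p] computed
      span_succs_rows_eq_po_q[OF i0] by simp
  also have "\<dots> = lin_span p (row H ` succs d lt i0)"
    by (rule lin_span_image_eq_span_fam[symmetric]) simp_all
  finally have "qsteps lt H (Suc k) = (qsteps lt H k)(i0 := po_q H lt i0)"
    unfolding po_q_def po_perp_def by (simp add: Let_def i0_def)
  then show ?case using Suc unfolding i0_def by (cases "i = d - Suc k") auto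
qed simp

lemma procQ_eq_poQ:
  assumes consistent: "\<forall>i<d. \<forall>j<d. lt i j \<longrightarrow> i < j"
  shows "procQ lt H = poQ H lt"
  unfolding procQ_def poQ_def by (rule eq_matI) (auto simp: qsteps_eq_po_q[OF consistent])

lemma upper_set_eq_insert_succs:
  "i < d \<Longrightarrow> {a. a < d \<and> a \<in> upper_set lt i} = insert i (succs d lt i)"
  unfolding succs_def by auto

lemma bij_betw_card_less_upper_set:
  "i < d \<Longrightarrow> bij_betw (\<lambda>j. card {a \<in> upper_set lt i. a < j})
     (insert i (succs d lt i)) {..<card (insert i (succs d lt i))}"
  using bij_betw_card_less[of "upper_set lt i" d] by (simp only: upper_set_eq_insert_succs)

lemma transpose_submatrix_poQ_mult_vec:
  assumes i: "i < d" and v: "v \<in> carrier_vec (card (insert i (succs d lt i)))"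
  shows "transpose_mat (submatrix (poQ H lt) (upper_set lt i) UNIV) *\<^sub>v v =
    lincomb_fam p (insert i (succs d lt i)) (\<lambda>j. v $ card {a \<in> upper_set lt i. a < j}) (po_q H lt)"
proof -
  have "transpose_mat (submatrix (poQ H lt) (upper_set lt i) UNIV) *\<^sub>v v =
    lincomb_fam p (insert i (succs d lt i)) (\<lambda>j. v $ card {a \<in> upper_set lt i. a < j}) (row (poQ H lt))"
    using transpose_submatrix_rows_mult_vec[OF poQ_carrier, of v "upper_set lt i"] v
      upper_set_eq_insert_succs[OF i] by simp
  also have "\<dots> = lincomb_fam p (insert i (succs d lt i))
      (\<lambda>j. v $ card {a \<in> upper_set lt i. a < j}) (po_q H lt)"
  proof (rule lincomb_fam_cong)
    fix j assume "j \<in> insert i (succs d lt i)"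
    then have "j < d" using i succs_subset by blast
    then show "row (poQ H lt) j = po_q H lt j" by (rule row_poQ)
  qed simp
  finally show ?thesis .
qed

lemma transpose_submatrix_poQ_inj:
  assumes i: "i < d" and v: "v \<in> carrier_vec (card (insert i (succs d lt i)))"
    and zero: "transpose_mat (submatrix (poQ H lt) (upper_set lt i) UNIV) *\<^sub>v v = 0\<^sub>v p"
  shows "v = 0\<^sub>v (card (insert i (succs d lt i)))"
proof (rule eq_vecI)
  let ?J = "insert i (succs d lt i)" and ?idx = "\<lambda>j. card {a \<in> upper_set lt i. a < j}"
  fix k assume k: "k < dim_vec (0\<^sub>v (card ?J))"
  then obtain j where j: "j \<in> ?J" "k = ?idx j"
    using bij_betw_imp_surj_on[OF bij_betw_card_less_upper_set[OF i]] by auto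
  have "?J \<subseteq> {..<d}" using i succs_subset by auto
  then have "lin_indep_fam p ?J (po_q H lt)"
    using lin_indep_fam_subset[OF lin_indep_po_q] by simp
  moreover have "lincomb_fam p ?J (\<lambda>j. v $ ?idx j) (po_q H lt) = 0\<^sub>v p"
    using transpose_submatrix_poQ_mult_vec[OF i v] zero by simp
  ultimately have "v $ ?idx j = 0" using j(1) unfolding lin_indep_fam_def by blast
  then show "v $ k = 0\<^sub>v (card ?J) $ k" using j(2) k by simp
qed (use v in simp)

lemma pinv_submatrix_poQ_mult_row:
  assumes i: "i < d"
  shows "pinv (transpose_mat (submatrix (poQ H lt) (upper_set lt i) UNIV)) *\<^sub>v row H i =
    vec (card (insert i (succs d lt i))) (\<lambda>k. poR H lt $$ (i, pick (upper_set lt i) k))"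
proof -
  let ?J = "insert i (succs d lt i)" and ?idx = "\<lambda>j. card {a \<in> upper_set lt i. a < j}"
  define A where "A = transpose_mat (submatrix (poQ H lt) (upper_set lt i) UNIV)"
  define r where "r = vec (card ?J) (\<lambda>k. poR H lt $$ (i, pick (upper_set lt i) k))"
  have A: "A \<in> carrier_mat p (card ?J)"
  proof (rule carrier_matI)
    show "dim_row A = p" "dim_col A = card ?J"
      unfolding A_def using carrier_matD[OF poQ_carrier] upper_set_eq_insert_succs[OF i]
      by (simp_all add: dim_submatrix)
  qed
  have A_inj: "\<And>v. v \<in> carrier_vec (card ?J) \<Longrightarrow> A *\<^sub>v v = 0\<^sub>v p \<Longrightarrow> v = 0\<^sub>v (card ?J)"
    unfolding A_def by (rule transpose_submatrix_poQ_inj[OF i])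
  have r_carrier: "r \<in> carrier_vec (card ?J)" unfolding r_def by simp
  \<comment> \<open>\<open>r\<close> lists the entries \<open>R\<^sub>i\<^sub>j\<close>, \<open>j \<succeq> i\<close>, in increasing order of \<open>j\<close>\<close>
  have "A *\<^sub>v r = lincomb_fam p ?J (\<lambda>j. poR H lt $$ (i, j)) (po_q H lt)"
    unfolding A_def transpose_submatrix_poQ_mult_vec[OF i r_carrier]
  proof (rule lincomb_fam_cong)
    fix j assume j: "j \<in> ?J"
    then have "pick (upper_set lt i) (?idx j) = j" unfolding succs_def by (intro pick_card_in_set) auto
    moreover have "?idx j < card ?J" using bij_betwE[OF bij_betw_card_less_upper_set[OF i]] j by blast
    ultimately show "r $ ?idx j = poR H lt $$ (i, j)" by (simp add: r_def)
  qed simp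
  also have "\<dots> = lincomb_fam p {..<d} (\<lambda>j. poR H lt $$ (i, j)) (po_q H lt)"
    using i succs_subset
    by (intro lincomb_fam_mono_neutral[symmetric]) (auto simp: index_poR[OF i] succs_def)
  also have "\<dots> = row H i" using row_poR_mult_poQ[OF i] poR_mult_poQ by simp
  finally have "pinv A *\<^sub>v row H i = (pinv A * A) *\<^sub>v r"
    using A pinv_left_inverse(1)[OF A A_inj] r_carrier by simp
  also have "\<dots> = r" using pinv_left_inverse(2)[OF A A_inj] by (simp add: r_def)
  finally show ?thesis unfolding A_def r_def .
qed

lemma procR_eq_poR:
  assumes consistent: "\<forall>i<d. \<forall>j<d. lt i j \<longrightarrow> i < j"
  shows "procR lt H = poR H lt"
proof (rule eq_matI)
  fix i j assume "i < dim_row (poR H lt)" "j < dim_col (poR H lt)"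
  then have i: "i < d" and j: "j < d" using poR_carrier by auto
  let ?S = "upper_set lt i" and ?J = "insert i (succs d lt i)"
  have "procR lt H $$ (i, j) = (if j \<in> ?S then
      (pinv (transpose_mat (submatrix (poQ H lt) ?S UNIV)) *\<^sub>v row H i) $ card {a \<in> ?S. a < j} else 0)"
    unfolding procR_def procQ_eq_poQ[OF consistent] Let_def
    by (simp only: index_mat(1) dim_row_H i j prod.case)
  also have "\<dots> = (if j \<in> ?S then
      vec (card ?J) (\<lambda>k. poR H lt $$ (i, pick ?S k)) $ card {a \<in> ?S. a < j} else 0)"
    unfolding pinv_submatrix_poQ_mult_row[OF i] ..
  also have "\<dots> = poR H lt $$ (i, j)"
  proof (cases "j \<in> ?S")
    case True
    then have "j \<in> ?J" using j unfolding succs_def by auto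
    then have "card {a \<in> ?S. a < j} \<in> {..<card ?J}"
      by (rule bij_betw_apply[OF bij_betw_card_less_upper_set[OF i]])
    moreover have "pick ?S (card {a \<in> ?S. a < j}) = j" using True by (rule pick_card_in_set)
    ultimately show ?thesis using True by simp
  next
    case False
    then show ?thesis using i j by (simp add: index_poR succs_def)
  qed
  finally show "procR lt H $$ (i, j) = poR H lt $$ (i, j)" .
qed (use poR_carrier in \<open>auto simp: procR_def\<close>)

end

theorem proposition7:
  fixes H :: "real mat" and lt :: "nat \<Rightarrow> nat \<Rightarrow> bool" and d p :: nat
  assumes "H \<in> carrier_mat d p"
    and "vec_space.rank d H = d"
    and "strict_po_on d lt"
  shows "(\<exists>!RQ. is_poRQ d p lt H (fst RQ) (snd RQ)) \<and>
         ((\<forall>i<d. \<forall>j<d. lt i j \<longrightarrow> i < j) \<longrightarrow> is_poRQ d p lt H (procR lt H) (procQ lt H))"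
proof
  show "\<exists>!RQ. is_poRQ d p lt H (fst RQ) (snd RQ)"
  proof (rule ex1I[of _ "(poR H lt, poQ H lt)"])
    show "is_poRQ d p lt H (fst (poR H lt, poQ H lt)) (snd (poR H lt, poQ H lt))"
      using is_poRQ_poR_poQ[OF assms] by simp
    fix RQ assume "is_poRQ d p lt H (fst RQ) (snd RQ)"
    then show "RQ = (poR H lt, poQ H lt)" using is_poRQ_unique[OF assms] by (simp add: prod_eq_iff)
  qed
  show "(\<forall>i<d. \<forall>j<d. lt i j \<longrightarrow> i < j) \<longrightarrow> is_poRQ d p lt H (procR lt H) (procQ lt H)"
    using is_poRQ_poR_poQ[OF assms] procR_eq_poR[OF assms] procQ_eq_poQ[OF assms] by simp
qed

end
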